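(* Fix $m\ge 3$ and $a=(a_1,\dots,a_m),\,b=(b_1,\dots,b_m)\in S_m$. (i) Suppose there is a number $c_0=c_0(a,b)$ such that $$\widetilde\Omega^{a_1}_{i_1i_2}\widetilde\Omega^{a_2}_{i_2i_3}\cdots\widetilde\Omega^{a_m}_{i_mi_1}=e^{c_0\rho}\,\widetilde\Omega^{b_1}_{i_1i_2}\widetilde\Omega^{b_2}_{i_2i_3}\cdots\widetilde\Omega^{b_m}_{i_mi_1}\qquad(\ast)$$ for all distinct $i_1,\dots,i_m\in\{1,\dots,n\}$. Then $g_{n,m}(a)/g_{n,m}(b)=e^{c_0\rho}$. (ii) If $m$ is odd, there is no pair $(a,b)\in S_m\times S_m$ and number $c_0>0$ such that $(\ast)$ holds identically, i.e. for all distinct indices and all values of the parameters $\rho,\gamma,\alpha_1,\beta_1,\dots,\alpha_n,\beta_n$. (iii) If $m$ is even, let $N=m/2$ and let $x_1,y_1,\dots,x_N,y_N\in\{0,1\}$ satisfy $c_0:=(x_1+\dots+x_N)-(y_1+\dots+y_N)>0$. Put $$a=(1x_1,\;y_10,\;1x_2,\;y_20,\;\dots,\;1x_N,\;y_N0),\qquad b=(0x_1,\;y_11,\;0x_2,\;y_21,\;\dots,\;0x_N,\;y_N1),$$ where e.g. "$1x_1$" denotes the edge code whose first digit is $1$ and second digit is $x_1$. Then $(\ast)$ holds identically with this $c_0$, so that $G_{n,m}(a)=\sum_{i_1,\dots,i_m\,(\mathrm{dist})}A^{1x_1}_{i_1i_2}A^{y_10}_{i_2i_3}\cdots A^{1x_N}_{i_{m-1}i_m}A^{y_N0}_{i_mi_1}$,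 $G_{n,m}(b)=\sum_{i_1,\dots,i_m\,(\mathrm{dist})}A^{0x_1}_{i_1i_2}A^{y_11}_{i_2i_3}\cdots A^{0x_N}_{i_{m-1}i_m}A^{y_N1}_{i_mi_1}$, and $g_{n,m}(a)/g_{n,m}(b)=e^{c_0\rho}$. (iv) Conversely, for any pair $(a',b')\in S_m\times S_m$ for which $(\ast)$ holds identically with some $c_0>0$, there is a pair $(a,b)$ as in (iii) such that the generalized $m$-cycle of Type-$a'$ is isomorphic to that of Type-$a$ and the generalized $m$-cycle of Type-$b'$ is isomorphic to that of Type-$b$.
   Context: The $p_1$ model: a directed network on nodes $\{1,\dots,n\}$ has adjacency matrix $A\in\{0,1\}^{n\times n}$ with $A_{ii}=0$ ($A_{ij}=1$ iff there is a directed edge $i\to j$). The pairs $(A_{ij},A_{ji})$, $1\le i<j\le n$, are independent, and for real parameters $\rho,\gamma,\alpha_1,\beta_1,\dots,\alpha_n,\beta_n$ with $\sum_i\alpha_i=\sum_i\beta_i=0$, for $a,b\in\{0,1\}$ and $i\ne j$, $\mathbb P(A_{ij}=a,A_{ji}=b)=K_{ij}\exp\big(a(\gamma+\alpha_i+\beta_j)+b(\gamma+\alpha_j+\beta_i)+ab\rho\big)$, with $K_{ij}=[1+e^{\gamma+\alpha_i+\beta_j}+e^{\gamma+\alpha_j+\beta_i}+e^{2\gamma+\alpha_i+\beta_j+\alpha_j+\beta_i+\rho}]^{-1}$. Let $\mu_i=e^{\gamma/2+\alpha_i}$, $\nu_i=e^{\gamma/2+\beta_i}$, $\eta_i=\mu_i\nu_i$.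 Edge codes: for $i\ne j$ the edge type between $i$ and $j$ (read from $i$ to $j$) is one of $00$ (no edge), $10$ (edge $i\to j$ only), $01$ (edge $j\to i$ only), $11$ (double edge). Let $\tilde J_n$ be the all-ones $n\times n$ matrix minus the identity and $\circ$ the entrywise product; $A^{11}=A\circ A'$, $A^{00}=(\tilde J_n-A)\circ(\tilde J_n-A')$, $A^{10}=A\circ(\tilde J_n-A')$, $A^{01}=(A^{10})'$. For $i\ne j$ set $\widetilde\Omega^{00}_{ij}=1$, $\widetilde\Omega^{10}_{ij}=\mu_i\nu_j$, $\widetilde\Omega^{01}_{ij}=\mu_j\nu_i$, $\widetilde\Omega^{11}_{ij}=e^\rho\eta_i\eta_j$, and $\Omega^c_{ij}=K_{ij}\widetilde\Omega^c_{ij}$ for $c\in\{00,10,01,11\}$ (so $\Omega^c_{ij}=\mathbb P(A^c_{ij}=1)$). $S_m$ is the set of $a=(a_1,\dots,a_m)$ with each $a_k\in\{00,10,01,11\}$. A generalized $m$-cycle of Type-$a$ consists of $m$ distinct nodes $i_1,\dots,i_m$ such that the edge type between $i_k$ and $i_{k+1}$ (with $i_{m+1}=i_1$), read from $i_k$ to $i_{k+1}$, is $a_k$; two such cycles are isomorphic if the corresponding directed graphs on $m$ vertices are isomorphic. Define $G_{n,m}(a)=\sum_{i_1,\dots,i_m\,(\mathrm{dist})}A^{a_1}_{i_1i_2}A^{a_2}_{i_2i_3}\cdots A^{a_m}_{i_mi_1}$ (sum over distinct indices) and $g_{n,m}(a)=\mathbb E[G_{n,m}(a)]=\sum_{i_1,\dots,i_m\,(\mathrm{dist})}\Omega^{a_1}_{i_1i_2}\cdots\Omega^{a_m}_{i_mi_1}$.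 *)

theory Defs
  imports Complex_Main
begin

text \<open>Nodes are 0,...,n-1. Edge codes are pairs of digits (d1,d2) :: bool \<times> bool,
  where the code read from i to j has d1 = [edge i->j] and d2 = [edge j->i];
  so (False,False) = 00, (True,False) = 10, (False,True) = 01, (True,True) = 11.
  A Type-a vector (a_1..a_m) is a list of codes of length m.\<close>

type_synonym code = "bool \<times> bool"

definition mu :: "real \<Rightarrow> (nat \<Rightarrow> real) \<Rightarrow> nat \<Rightarrow> real" where
  "mu \<gamma> \<alpha> i = exp (\<gamma>/2 + \<alpha> i)"

definition nu :: "real \<Rightarrow> (nat \<Rightarrow> real) \<Rightarrow> nat \<Rightarrow> real" where
  "nu \<gamma> \<beta> i = exp (\<gamma>/2 + \<beta> i)"

definition eta :: "real \<Rightarrow> (nat \<Rightarrow> real) \<Rightarrow> (nat \<Rightarrow> real) \<Rightarrow> nat \<Rightarrow> real" where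
  "eta \<gamma> \<alpha> \<beta> i = mu \<gamma> \<alpha> i * nu \<gamma> \<beta> i"

definition Kc :: "real \<Rightarrow> real \<Rightarrow> (nat \<Rightarrow> real) \<Rightarrow> (nat \<Rightarrow> real) \<Rightarrow> nat \<Rightarrow> nat \<Rightarrow> real" where
  "Kc \<rho> \<gamma> \<alpha> \<beta> i j = 1 / (1 + exp (\<gamma> + \<alpha> i + \<beta> j) + exp (\<gamma> + \<alpha> j + \<beta> i)
      + exp (2*\<gamma> + \<alpha> i + \<beta> j + \<alpha> j + \<beta> i + \<rho>))"

definition Omega_t :: "real \<Rightarrow> real \<Rightarrow> (nat \<Rightarrow> real) \<Rightarrow> (nat \<Rightarrow> real) \<Rightarrow> code \<Rightarrow> nat \<Rightarrow> nat \<Rightarrow> real" where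
  "Omega_t \<rho> \<gamma> \<alpha> \<beta> c i j =
     (case c of
        (False, False) \<Rightarrow> 1
      | (True, False) \<Rightarrow> mu \<gamma> \<alpha> i * nu \<gamma> \<beta> j
      | (False, True) \<Rightarrow> mu \<gamma> \<alpha> j * nu \<gamma> \<beta> i
      | (True, True) \<Rightarrow> exp \<rho> * eta \<gamma> \<alpha> \<beta> i * eta \<gamma> \<alpha> \<beta> j)"

definition Omega :: "real \<Rightarrow> real \<Rightarrow> (nat \<Rightarrow> real) \<Rightarrow> (nat \<Rightarrow> real) \<Rightarrow> code \<Rightarrow> nat \<Rightarrow> nat \<Rightarrow> real" where
  "Omega \<rho> \<gamma> \<alpha> \<beta> c i j = Kc \<rho> \<gamma> \<alpha> \<beta> i j * Omega_t \<rho> \<gamma> \<alpha> \<beta> c i j"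

definition dist_tuples :: "nat \<Rightarrow> nat \<Rightarrow> nat list set" where
  "dist_tuples n m = {xs. length xs = m \<and> distinct xs \<and> set xs \<subseteq> {..<n}}"

definition cyc_prod :: "(code \<Rightarrow> nat \<Rightarrow> nat \<Rightarrow> real) \<Rightarrow> code list \<Rightarrow> nat list \<Rightarrow> real" where
  "cyc_prod f a xs = (\<Prod>k<length a. f (a ! k) (xs ! k) (xs ! (Suc k mod length a)))"

definition g_nm :: "real \<Rightarrow> real \<Rightarrow> (nat \<Rightarrow> real) \<Rightarrow> (nat \<Rightarrow> real) \<Rightarrow> nat \<Rightarrow> code list \<Rightarrow> real" where
  "g_nm \<rho> \<gamma> \<alpha> \<beta> n a =
     (\<Sum>xs\<in>dist_tuples n (length a). cyc_prod (Omega \<rho> \<gamma> \<alpha> \<beta>) a xs)"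

definition admissible :: "nat \<Rightarrow> (nat \<Rightarrow> real) \<Rightarrow> (nat \<Rightarrow> real) \<Rightarrow> bool" where
  "admissible n \<alpha> \<beta> \<longleftrightarrow> (\<Sum>i<n. \<alpha> i) = 0 \<and> (\<Sum>i<n. \<beta> i) = 0"

definition star_at :: "real \<Rightarrow> real \<Rightarrow> (nat \<Rightarrow> real) \<Rightarrow> (nat \<Rightarrow> real) \<Rightarrow> nat \<Rightarrow> code list \<Rightarrow> code list \<Rightarrow> real \<Rightarrow> bool" where
  "star_at \<rho> \<gamma> \<alpha> \<beta> n a b c0 \<longleftrightarrow>
     (\<forall>xs\<in>dist_tuples n (length a).
        cyc_prod (Omega_t \<rho> \<gamma> \<alpha> \<beta>) a xs = exp (c0 * \<rho>) * cyc_prod (Omega_t \<rho> \<gamma> \<alpha> \<beta>) b xs)"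

definition star_ident :: "nat \<Rightarrow> code list \<Rightarrow> code list \<Rightarrow> real \<Rightarrow> bool" where
  "star_ident n a b c0 \<longleftrightarrow>
     (\<forall>\<rho> \<gamma> \<alpha> \<beta>. admissible n \<alpha> \<beta> \<longrightarrow> star_at \<rho> \<gamma> \<alpha> \<beta> n a b c0)"

text \<open>The pair (a,b) of part (iii) built from x_1..x_N, y_1..y_N (indexed 0..N-1).\<close>
definition type_a :: "nat \<Rightarrow> (nat \<Rightarrow> bool) \<Rightarrow> (nat \<Rightarrow> bool) \<Rightarrow> code list" where
  "type_a N x y = concat (map (\<lambda>k. [(True, x k), (y k, False)]) [0..<N])"

definition type_b :: "nat \<Rightarrow> (nat \<Rightarrow> bool) \<Rightarrow> (nat \<Rightarrow> bool) \<Rightarrow> code list" where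
  "type_b N x y = concat (map (\<lambda>k. [(False, x k), (y k, True)]) [0..<N])"

definition c0_of :: "nat \<Rightarrow> (nat \<Rightarrow> bool) \<Rightarrow> (nat \<Rightarrow> bool) \<Rightarrow> real" where
  "c0_of N x y = (\<Sum>k<N. of_bool (x k)) - (\<Sum>k<N. of_bool (y k))"

text \<open>Directed graph on vertices 0..m-1 of the generalized m-cycle of Type-a
  (vertex k plays the role of i_{k+1}).\<close>
definition cycle_digraph :: "code list \<Rightarrow> (nat \<times> nat) set" where
  "cycle_digraph a =
     {(k, Suc k mod length a) | k. k < length a \<and> fst (a ! k)} \<union>
     {(Suc k mod length a, k) | k. k < length a \<and> snd (a ! k)}"

definition digraph_iso :: "nat \<Rightarrow> (nat \<times> nat) set \<Rightarrow> (nat \<times> nat) set \<Rightarrow> bool" where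
  "digraph_iso m E F \<longleftrightarrow>
     (\<exists>\<pi>. bij_betw \<pi> {..<m} {..<m} \<and>
          (\<forall>u<m. \<forall>v<m. (u, v) \<in> E \<longleftrightarrow> (\<pi> u, \<pi> v) \<in> F))"

definition cycles_iso :: "code list \<Rightarrow> code list \<Rightarrow> bool" where
  "cycles_iso a b \<longleftrightarrow> length a = length b \<and>
     digraph_iso (length a) (cycle_digraph a) (cycle_digraph b)"

end

theory Submission
  imports Defs
begin

text \<open>Each unnormalised dyad weight is exp of a form linear in (\<rho>, \<gamma>, \<alpha>, \<beta>) whose
  coefficients are read off the two digits of the edge code, and the normalising factors
  K_ij do not depend on the type; so (*) at every tuple gives (i) term by term.

  If (*) holds identically, the free \<gamma> absorbs the constraints on \<alpha> and \<beta>, and testing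
  with weight on a single node shows that the differences u_k, v_k of the first and second
  digits of a_k and b_k satisfy u_(k+1) = -v_k and v_(k+1) = -u_k; testing with \<rho> alone
  shows that c_0 is the difference of the numbers of double edges. Hence u is 2-periodic
  around the cycle. For odd m it is constant, so u_k + v_k = 0, the double edges of a and b
  correspond, and c_0 = 0. For even m the differences alternate with values (p, q) in
  {-1, 0, 1}; p = q and p = -q again force c_0 = 0, and rotating or reversing the cycle carries
  each of the four remaining patterns to (p, q) = (1, 0), which is exactly the shape of the
  types in (iii). For that shape the node terms telescope around the cycle, which gives (iii).\<close>

lemma Suc_mod_eq_iff: "j < m \<Longrightarrow> k < m \<Longrightarrow> Suc j mod m = Suc k mod m \<longleftrightarrow> j = k"
  by (auto simp: mod_Suc)

lemma Suc_mod_less [simp]: "k < m \<Longrightarrow> Suc k mod m < m"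
  by simp

lemma even_Suc_mod_iff: "even m \<Longrightarrow> even (Suc k mod m) \<longleftrightarrow> odd k"
  by (simp add: dvd_mod_iff)

lemma sum_Suc_mod_rotate:
  fixes f :: "nat \<Rightarrow> 'a::comm_monoid_add"
  shows "(\<Sum>k<m. f (Suc k mod m)) = (\<Sum>k<m. f k)"
proof (cases m)
  case (Suc m')
  have "(\<Sum>k<m'. f (Suc k mod Suc m')) = (\<Sum>k<m'. f (Suc k))"
    by (intro sum.cong) auto
  then have "(\<Sum>k<Suc m'. f (Suc k mod Suc m')) = (\<Sum>k<m'. f (Suc k)) + f 0"
    by simp
  also have "\<dots> = (\<Sum>k<Suc m'. f k)"
    by (subst sum.lessThan_Suc_shift) (simp add: add.commute)
  finally show ?thesis
    using Suc by simp
qed simp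

lemma mod_periodic_iterate:
  fixes h :: "nat \<Rightarrow> 'a" and k m p j :: nat
  assumes "\<And>k. k < m \<Longrightarrow> h ((k + p) mod m) = h k" "k < m"
  shows "h ((k + p * j) mod m) = h k"
proof (induction j)
  case (Suc j)
  have "(k + p * Suc j) mod m = ((k + p * j) mod m + p) mod m"
    by (simp add: mod_simps algebra_simps)
  then show ?case
    using assms(1)[of "(k + p * j) mod m"] assms(2) Suc by simp
qed (use assms(2) in simp)

section \<open>Exponential form of the dyad weights\<close>

definition fwd :: "code \<Rightarrow> real" where
  "fwd c = of_bool (fst c)"

definition bwd :: "code \<Rightarrow> real" where
  "bwd c = of_bool (snd c)"

definition dbl :: "code \<Rightarrow> real" where
  "dbl c = of_bool (fst c \<and> snd c)"

definition Omega_t_exponent ::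
    "real \<Rightarrow> real \<Rightarrow> (nat \<Rightarrow> real) \<Rightarrow> (nat \<Rightarrow> real) \<Rightarrow> code \<Rightarrow> nat \<Rightarrow> nat \<Rightarrow> real" where
  "Omega_t_exponent \<rho> \<gamma> \<alpha> \<beta> c i j =
     dbl c * \<rho> + fwd c * (\<gamma> + \<alpha> i + \<beta> j) + bwd c * (\<gamma> + \<alpha> j + \<beta> i)"

definition exponent_sum ::
    "real \<Rightarrow> real \<Rightarrow> (nat \<Rightarrow> real) \<Rightarrow> (nat \<Rightarrow> real) \<Rightarrow> code list \<Rightarrow> nat list \<Rightarrow> real" where
  "exponent_sum \<rho> \<gamma> \<alpha> \<beta> a xs =
     (\<Sum>k<length a. Omega_t_exponent \<rho> \<gamma> \<alpha> \<beta> (a ! k) (xs ! k) (xs ! (Suc k mod length a)))"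

definition double_count :: "code list \<Rightarrow> real" where
  "double_count a = sum_list (map dbl a)"

lemma Omega_t_eq_exp: "Omega_t \<rho> \<gamma> \<alpha> \<beta> c i j = exp (Omega_t_exponent \<rho> \<gamma> \<alpha> \<beta> c i j)"
proof -
  obtain p q where c: "c = (p, q)" by (cases c)
  show ?thesis
    by (cases p; cases q)
      (simp_all add: c Omega_t_def Omega_t_exponent_def fwd_def bwd_def dbl_def mu_def nu_def
        eta_def exp_add[symmetric] algebra_simps)
qed

lemma cyc_prod_Omega_t_eq_exp:
  "cyc_prod (Omega_t \<rho> \<gamma> \<alpha> \<beta>) a xs = exp (exponent_sum \<rho> \<gamma> \<alpha> \<beta> a xs)"
  by (simp add: cyc_prod_def exponent_sum_def Omega_t_eq_exp exp_sum)

lemma star_at_iff_exponent_sum: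
  "star_at \<rho> \<gamma> \<alpha> \<beta> n a b c0 \<longleftrightarrow>
     (\<forall>xs\<in>dist_tuples n (length a).
        exponent_sum \<rho> \<gamma> \<alpha> \<beta> a xs = c0 * \<rho> + exponent_sum \<rho> \<gamma> \<alpha> \<beta> b xs)"
  by (simp add: star_at_def cyc_prod_Omega_t_eq_exp exp_add[symmetric])

lemma double_count_eq_sum: "double_count a = (\<Sum>k<length a. dbl (a ! k))"
  by (simp add: double_count_def sum_list_sum_nth atLeast0LessThan)

section \<open>The ratio of expected cycle counts\<close>

lemma Kc_pos: "Kc \<rho> \<gamma> \<alpha> \<beta> i j > 0"
  unfolding Kc_def by (intro divide_pos_pos add_pos_pos) auto

lemma Omega_pos: "Omega \<rho> \<gamma> \<alpha> \<beta> c i j > 0"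
  unfolding Omega_def Omega_t_eq_exp using Kc_pos by simp

lemma finite_dist_tuples: "finite (dist_tuples n m)"
proof (rule finite_subset)
  show "dist_tuples n m \<subseteq> {xs. set xs \<subseteq> {..<n} \<and> length xs = m}"
    by (auto simp: dist_tuples_def)
qed (simp add: finite_lists_length_eq)

lemma upt_mem_dist_tuples: "m \<le> n \<Longrightarrow> [0..<m] \<in> dist_tuples n m"
  by (auto simp: dist_tuples_def)

lemma cyc_prod_Omega:
  "cyc_prod (Omega \<rho> \<gamma> \<alpha> \<beta>) a xs =
     (\<Prod>k<length a. Kc \<rho> \<gamma> \<alpha> \<beta> (xs ! k) (xs ! (Suc k mod length a))) *
     cyc_prod (Omega_t \<rho> \<gamma> \<alpha> \<beta>) a xs"
  by (simp add: cyc_prod_def Omega_def prod.distrib)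

lemma g_nm_pos:
  assumes "length a \<le> n"
  shows "g_nm \<rho> \<gamma> \<alpha> \<beta> n a > 0"
  unfolding g_nm_def using finite_dist_tuples upt_mem_dist_tuples[OF assms]
  by (intro sum_pos) (auto simp: cyc_prod_def Omega_pos intro!: prod_pos)

lemma g_nm_ratio_if_star_at:
  assumes "length b = length a" "length a \<le> n" "star_at \<rho> \<gamma> \<alpha> \<beta> n a b c0"
  shows "g_nm \<rho> \<gamma> \<alpha> \<beta> n a / g_nm \<rho> \<gamma> \<alpha> \<beta> n b = exp (c0 * \<rho>)"
proof -
  have "g_nm \<rho> \<gamma> \<alpha> \<beta> n a = exp (c0 * \<rho>) * g_nm \<rho> \<gamma> \<alpha> \<beta> n b"
    using assms unfolding g_nm_def
    by (simp add: sum_distrib_left cyc_prod_Omega star_at_def mult.left_commute cong: sum.cong)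
  then show ?thesis
    using g_nm_pos[of b n \<rho> \<gamma> \<alpha> \<beta>] assms by simp
qed

section \<open>The alternating types\<close>

lemma type_a_Suc: "type_a (Suc N) x y = type_a N x y @ [(True, x N), (y N, False)]"
  by (simp add: type_a_def)

lemma type_b_Suc: "type_b (Suc N) x y = type_b N x y @ [(False, x N), (y N, True)]"
  by (simp add: type_b_def)

lemma length_type_a [simp]: "length (type_a N x y) = 2 * N"
  by (induction N) (simp_all add: type_a_Suc, simp add: type_a_def)

lemma length_type_b [simp]: "length (type_b N x y) = 2 * N"
  by (induction N) (simp_all add: type_b_Suc, simp add: type_b_def)

lemma nth_type_a:
  "k < 2 * N \<Longrightarrow> type_a N x y ! k = (if even k then (True, x (k div 2)) else (y (k div 2), False))"
proof (induction N arbitrary: k)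
  case (Suc N)
  from Suc.prems consider "k < 2 * N" | "k = 2 * N" | "k = 2 * N + 1" by force
  then show ?case
    using Suc.IH by cases (simp_all add: type_a_Suc nth_append)
qed simp

lemma nth_type_b:
  "k < 2 * N \<Longrightarrow> type_b N x y ! k = (if even k then (False, x (k div 2)) else (y (k div 2), True))"
proof (induction N arbitrary: k)
  case (Suc N)
  from Suc.prems consider "k < 2 * N" | "k = 2 * N" | "k = 2 * N + 1" by force
  then show ?case
    using Suc.IH by cases (simp_all add: type_b_Suc nth_append)
qed simp

lemma c0_of_eq_double_count_diff:
  "c0_of N x y = double_count (type_a N x y) - double_count (type_b N x y)"
  by (induction N) (simp_all add: c0_of_def type_a_Suc type_b_Suc double_count_def dbl_def,
      simp add: type_a_def type_b_def)

lemma Omega_t_exponent_set_fwd: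
  "Omega_t_exponent \<rho> \<gamma> \<alpha> \<beta> (True, z) i j =
     Omega_t_exponent \<rho> \<gamma> \<alpha> \<beta> (False, z) i j + of_bool z * \<rho> + (\<gamma> + \<alpha> i + \<beta> j)"
  by (simp add: Omega_t_exponent_def fwd_def bwd_def dbl_def algebra_simps)

lemma Omega_t_exponent_clear_bwd:
  "Omega_t_exponent \<rho> \<gamma> \<alpha> \<beta> (z, False) i j =
     Omega_t_exponent \<rho> \<gamma> \<alpha> \<beta> (z, True) i j - of_bool z * \<rho> - (\<gamma> + \<alpha> j + \<beta> i)"
  by (simp add: Omega_t_exponent_def fwd_def bwd_def dbl_def algebra_simps)

lemma exponent_sum_type_a:
  "exponent_sum \<rho> \<gamma> \<alpha> \<beta> (type_a N x y) xs =
     c0_of N x y * \<rho> + exponent_sum \<rho> \<gamma> \<alpha> \<beta> (type_b N x y) xs"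
proof -
  let ?a = "type_a N x y" and ?b = "type_b N x y" and ?m = "2 * N"
  define \<phi> where "\<phi> t = (if even t then \<alpha> (xs ! t) + \<gamma> / 2 else - \<beta> (xs ! t) - \<gamma> / 2)" for t
    \<comment> \<open>the node terms of a and b differ by a coboundary of this potential\<close>
  have termwise: "Omega_t_exponent \<rho> \<gamma> \<alpha> \<beta> (?a ! k) (xs ! k) (xs ! (Suc k mod ?m)) =
      Omega_t_exponent \<rho> \<gamma> \<alpha> \<beta> (?b ! k) (xs ! k) (xs ! (Suc k mod ?m))
      + (dbl (?a ! k) - dbl (?b ! k)) * \<rho> + (\<phi> k - \<phi> (Suc k mod ?m))" if "k < ?m" for k
  proof (cases "even k")
    case True
    then have "Suc k mod ?m = Suc k"
      using that by (metis Suc_lessI dvd_triv_left even_Suc mod_less)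
    then show ?thesis
      using that True by (simp add: nth_type_a nth_type_b Omega_t_exponent_set_fwd dbl_def \<phi>_def)
  next
    case False
    then have "even (Suc k mod ?m)"
      by (simp add: even_Suc_mod_iff)
    then show ?thesis
      using that False by (simp add: nth_type_a nth_type_b Omega_t_exponent_clear_bwd dbl_def \<phi>_def)
  qed
  have "exponent_sum \<rho> \<gamma> \<alpha> \<beta> ?a xs = exponent_sum \<rho> \<gamma> \<alpha> \<beta> ?b xs
      + (\<Sum>k<?m. dbl (?a ! k) - dbl (?b ! k)) * \<rho> + ((\<Sum>k<?m. \<phi> k) - (\<Sum>k<?m. \<phi> (Suc k mod ?m)))"
    by (simp add: exponent_sum_def termwise sum.distrib sum_subtractf flip: sum_distrib_right)
  then show ?thesis
    by (simp add: sum_Suc_mod_rotate sum_subtractf double_count_eq_sum c0_of_eq_double_count_diff)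
qed

lemma star_at_type_a_type_b: "star_at \<rho> \<gamma> \<alpha> \<beta> n (type_a N x y) (type_b N x y) (c0_of N x y)"
  by (simp add: star_at_iff_exponent_sum exponent_sum_type_a)

section \<open>Linear consequences of an identity (*)\<close>

lemma exponent_sum_shift:
  "exponent_sum \<rho> (s + t) (\<lambda>i. d i - s) (\<lambda>i. e i - t) a xs = exponent_sum \<rho> 0 d e a xs"
  by (simp add: exponent_sum_def Omega_t_exponent_def algebra_simps)

lemma admissible_centered:
  "admissible n (\<lambda>i. d i - (\<Sum>i<n. d i) / n) (\<lambda>i. e i - (\<Sum>i<n. e i) / n)"
  by (cases "n = 0") (simp_all add: admissible_def sum_subtractf)

text \<open>The free parameter \<gamma> absorbs the normalisation of \<alpha> and \<beta>, so an identity (*)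
  yields a linear identity for arbitrary node weights d and e.\<close>

lemma star_ident_imp_exponent_sum_eq:
  assumes "star_ident n a b c0" "length b = length a" "length a \<le> n"
  shows "exponent_sum \<rho> 0 d e a [0..<length a] = c0 * \<rho> + exponent_sum \<rho> 0 d e b [0..<length a]"
proof -
  define s where "s = (\<Sum>i<n. d i) / n"
  define t where "t = (\<Sum>i<n. e i) / n"
  have "star_at \<rho> (s + t) (\<lambda>i. d i - s) (\<lambda>i. e i - t) n a b c0"
    using assms(1) admissible_centered[of n d e] by (simp add: star_ident_def s_def t_def)
  then show ?thesis
    using upt_mem_dist_tuples[OF assms(3)] by (simp add: star_at_iff_exponent_sum exponent_sum_shift)
qed

lemma exponent_sum_upt:
  "exponent_sum \<rho> 0 d e a [0..<length a] =
    (\<Sum>k<length a. dbl (a ! k) * \<rho> + fwd (a ! k) * (d k + e (Suc k mod length a))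
                    + bwd (a ! k) * (d (Suc k mod length a) + e k))"
  unfolding exponent_sum_def Omega_t_exponent_def by (intro sum.cong) auto

lemma exponent_sum_rho_only: "exponent_sum \<rho> 0 (\<lambda>_. 0) (\<lambda>_. 0) a xs = double_count a * \<rho>"
  by (simp add: exponent_sum_def Omega_t_exponent_def double_count_eq_sum sum_distrib_right)

lemma sum_cyclic_delta:
  fixes f g :: "nat \<Rightarrow> real"
  assumes "k < m"
  shows "(\<Sum>j<m. f j * of_bool (j = Suc k mod m) + g j * of_bool (Suc j mod m = Suc k mod m))
    = f (Suc k mod m) + g k"
proof -
  have "(\<Sum>j<m. g j * of_bool (Suc j mod m = Suc k mod m)) = (\<Sum>j<m. g j * of_bool (j = k))"
    using assms by (intro sum.cong) (auto simp: Suc_mod_eq_iff)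
  also have "\<dots> = g k"
    using assms by simp
  finally have "(\<Sum>j<m. g j * of_bool (Suc j mod m = Suc k mod m)) = g k" .
  moreover have "(\<Sum>j<m. f j * of_bool (j = Suc k mod m)) = f (Suc k mod m)"
    using assms by simp
  ultimately show ?thesis by (simp add: sum.distrib)
qed

lemma star_ident_double_count:
  assumes "star_ident n a b c0" "length b = length a" "length a \<le> n"
  shows "double_count a = c0 + double_count b"
  using star_ident_imp_exponent_sum_eq[OF assms, of 1 "\<lambda>_. 0" "\<lambda>_. 0"]
  by (simp add: exponent_sum_rho_only)

definition fwd_diff :: "code list \<Rightarrow> code list \<Rightarrow> nat \<Rightarrow> real" where
  "fwd_diff a b k = fwd (a ! k) - fwd (b ! k)"

definition bwd_diff :: "code list \<Rightarrow> code list \<Rightarrow> nat \<Rightarrow> real" where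
  "bwd_diff a b k = bwd (a ! k) - bwd (b ! k)"

lemma star_ident_diff_relations:
  assumes "star_ident n a b c0" "length b = length a" "length a \<le> n" "k < length a"
  shows "fwd_diff a b (Suc k mod length a) = - bwd_diff a b k"
    and "bwd_diff a b (Suc k mod length a) = - fwd_diff a b k"
proof -
  let ?\<delta> = "\<lambda>i. of_bool (i = Suc k mod length a) :: real"
  have at_\<alpha>: "exponent_sum 0 0 ?\<delta> (\<lambda>_. 0) c [0..<length c] = fwd (c ! (Suc k mod length a)) + bwd (c ! k)"
    and at_\<beta>: "exponent_sum 0 0 (\<lambda>_. 0) ?\<delta> c [0..<length c] = bwd (c ! (Suc k mod length a)) + fwd (c ! k)"
    if "length c = length a" for c
    unfolding exponent_sum_upt using that sum_cyclic_delta[OF assms(4)] by (simp_all add: algebra_simps)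
  show "fwd_diff a b (Suc k mod length a) = - bwd_diff a b k"
    using star_ident_imp_exponent_sum_eq[OF assms(1-3), of 0 ?\<delta> "\<lambda>_. 0"] at_\<alpha>[of a] at_\<alpha>[of b] assms(2)
    by (simp add: fwd_diff_def bwd_diff_def)
  show "bwd_diff a b (Suc k mod length a) = - fwd_diff a b k"
    using star_ident_imp_exponent_sum_eq[OF assms(1-3), of 0 "\<lambda>_. 0" ?\<delta>] at_\<beta>[of a] at_\<beta>[of b] assms(2)
    by (simp add: fwd_diff_def bwd_diff_def)
qed

lemma star_ident_fwd_diff_2_periodic:
  assumes "star_ident n a b c0" "length b = length a" "length a \<le> n" "k < length a"
  shows "fwd_diff a b ((k + 2) mod length a) = fwd_diff a b k"
proof -
  have "Suc (Suc k mod length a) mod length a = (k + 2) mod length a"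
    by (simp add: mod_Suc_eq)
  moreover have "Suc k mod length a < length a"
    using assms(4) by simp
  ultimately show ?thesis
    using star_ident_diff_relations[OF assms(1-3)] assms(4) by (metis minus_minus)
qed

lemma dbl_eq_if_digit_sums_eq: "fwd c + bwd c = fwd d + bwd d \<Longrightarrow> dbl c = dbl d"
  by (cases "fst c"; cases "snd c"; cases "fst d"; cases "snd d") (simp_all add: fwd_def bwd_def dbl_def)

lemma star_ident_odd_length_imp_zero:
  assumes "star_ident n a b c0" "length b = length a" "length a \<le> n" "odd (length a)"
  shows "c0 = 0"
proof -
  let ?m = "length a"
  obtain t where t: "?m = 2 * t + 1" using assms(4) by (rule oddE)
  have fwd_diff_shift: "fwd_diff a b (Suc k mod ?m) = fwd_diff a b k" if "k < ?m" for k
  proof -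
    have "k + 2 * Suc t = Suc k + ?m"
      using t by simp
    then have "(k + 2 * Suc t) mod ?m = Suc k mod ?m"
      by (metis mod_add_self2)
    then show ?thesis
      using mod_periodic_iterate[of ?m "fwd_diff a b" 2 k "Suc t"] that
        star_ident_fwd_diff_2_periodic[OF assms(1-3)] by simp
  qed
  have "dbl (a ! k) = dbl (b ! k)" if "k < ?m" for k
    using star_ident_diff_relations(1)[OF assms(1-3) that] fwd_diff_shift[OF that]
    by (intro dbl_eq_if_digit_sums_eq) (simp add: fwd_diff_def bwd_diff_def)
  then have "double_count a = double_count b"
    using assms(2) by (simp add: double_count_eq_sum)
  then show ?thesis
    using star_ident_double_count[OF assms(1-3)] by simp
qed

definition diff_pattern :: "real \<Rightarrow> real \<Rightarrow> code list \<Rightarrow> code list \<Rightarrow> bool" where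
  "diff_pattern p q a b \<longleftrightarrow> length b = length a \<and>
     (\<forall>k<length a. fwd_diff a b k = (if even k then p else q) \<and>
                   bwd_diff a b k = (if even k then - q else - p))"

lemma star_ident_even_length_diff_pattern:
  assumes "star_ident n a b c0" "length b = length a" "length a \<le> n" "even (length a)"
  shows "diff_pattern (fwd_diff a b 0) (fwd_diff a b 1) a b"
proof -
  let ?m = "length a"
  have fwd: "fwd_diff a b k = (if even k then fwd_diff a b 0 else fwd_diff a b 1)" if "k < ?m" for k
  proof -
    have "2 \<le> ?m"
      using that assms(4) by (auto elim: evenE)
    then have "k mod 2 < ?m"
      by (meson less_le_trans mod_less_divisor pos2)
    then have "fwd_diff a b ((k mod 2 + 2 * (k div 2)) mod ?m) = fwd_diff a b (k mod 2)"
      by (intro mod_periodic_iterate star_ident_fwd_diff_2_periodic[OF assms(1-3)])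
    then show ?thesis
      using that by (simp add: even_iff_mod_2_eq_zero odd_iff_mod_2_eq_one)
  qed
  have "bwd_diff a b k = (if even k then - fwd_diff a b 1 else - fwd_diff a b 0)" if "k < ?m" for k
  proof -
    have "Suc k mod ?m < ?m" and "even (Suc k mod ?m) \<longleftrightarrow> odd k"
      using that assms(4) by (auto simp: even_Suc_mod_iff)
    then show ?thesis
      using star_ident_diff_relations(1)[OF assms(1-3) that] fwd[of "Suc k mod ?m"] by auto
  qed
  then show ?thesis
    using fwd assms(2) by (simp add: diff_pattern_def)
qed

lemma fwd_diff_range: "fwd_diff a b k \<in> {-1, 0, 1}"
  by (simp add: fwd_diff_def fwd_def)

lemma dbl_diff_if_digit_diffs_eq: "fwd c - fwd d = bwd c - bwd d \<Longrightarrow> dbl c - dbl d = fwd c - fwd d"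
  by (cases "fst c"; cases "snd c"; cases "fst d"; cases "snd d") (simp_all add: fwd_def bwd_def dbl_def)

lemma double_count_eq_if_diff_pattern_same:
  assumes "diff_pattern p p a b"
  shows "double_count a = double_count b"
proof -
  have "dbl (a ! k) = dbl (b ! k)" if "k < length a" for k
    using assms that by (intro dbl_eq_if_digit_sums_eq) (auto simp: diff_pattern_def fwd_diff_def bwd_diff_def)
  then show ?thesis
    using assms by (simp add: double_count_eq_sum diff_pattern_def)
qed

lemma sum_alternating: "(\<Sum>k<2 * (N::nat). if even k then p else - p) = (0 :: real)"
  by (induction N) simp_all

lemma double_count_eq_if_diff_pattern_opposite:
  assumes "diff_pattern p (- p) a b" "even (length a)"
  shows "double_count a = double_count b"
proof -
  obtain N where N: "length a = 2 * N" using assms(2) by (rule evenE)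
  have "dbl (a ! k) - dbl (b ! k) = (if even k then p else - p)" if "k < length a" for k
    using assms(1) that dbl_diff_if_digit_diffs_eq[of "a ! k" "b ! k"]
    by (auto simp: diff_pattern_def fwd_diff_def bwd_diff_def)
  then have "double_count a - double_count b = (\<Sum>k<2 * N. if even k then p else - p)"
    using assms(1) N by (simp add: double_count_eq_sum diff_pattern_def flip: sum_subtractf)
  then show ?thesis
    by (simp add: sum_alternating)
qed

section \<open>Rotating and reversing a cycle\<close>

lemma digraph_iso_refl: "digraph_iso m E E"
  unfolding digraph_iso_def by (intro exI[of _ id]) auto

lemma digraph_iso_sym:
  assumes "digraph_iso m E F"
  shows "digraph_iso m F E"
proof -
  obtain \<pi> where \<pi>: "bij_betw \<pi> {..<m} {..<m}"
    and edges: "\<forall>u<m. \<forall>v<m. (u, v) \<in> E \<longleftrightarrow> (\<pi> u, \<pi> v) \<in> F"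
    using assms by (auto simp: digraph_iso_def)
  let ?\<psi> = "inv_into {..<m} \<pi>"
  have "?\<psi> u < m" and "\<pi> (?\<psi> u) = u" if "u < m" for u
    using that bij_betw_inv_into_right[OF \<pi>] bij_betw_apply[OF bij_betw_inv_into[OF \<pi>]] by auto
  then have "\<forall>u<m. \<forall>v<m. (u, v) \<in> F \<longleftrightarrow> (?\<psi> u, ?\<psi> v) \<in> E"
    using edges by metis
  then show ?thesis
    using bij_betw_inv_into[OF \<pi>] by (auto simp: digraph_iso_def)
qed

lemma digraph_iso_trans:
  assumes "digraph_iso m E F" "digraph_iso m F G"
  shows "digraph_iso m E G"
proof -
  obtain \<pi> \<sigma> where \<pi>: "bij_betw \<pi> {..<m} {..<m}" "\<forall>u<m. \<forall>v<m. (u, v) \<in> E \<longleftrightarrow> (\<pi> u, \<pi> v) \<in> F"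
    and \<sigma>: "bij_betw \<sigma> {..<m} {..<m}" "\<forall>u<m. \<forall>v<m. (u, v) \<in> F \<longleftrightarrow> (\<sigma> u, \<sigma> v) \<in> G"
    using assms by (auto simp: digraph_iso_def)
  have "\<forall>u<m. \<forall>v<m. (u, v) \<in> E \<longleftrightarrow> ((\<sigma> \<circ> \<pi>) u, (\<sigma> \<circ> \<pi>) v) \<in> G"
    using \<pi> \<sigma>(2) bij_betw_apply[OF \<pi>(1)] by simp
  then show ?thesis
    using bij_betw_trans[OF \<pi>(1) \<sigma>(1)] by (auto simp: digraph_iso_def)
qed

lemma cycles_iso_refl: "cycles_iso a a"
  by (simp add: cycles_iso_def digraph_iso_refl)

lemma cycles_iso_sym: "cycles_iso a b \<Longrightarrow> cycles_iso b a"
  by (metis cycles_iso_def digraph_iso_sym)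

lemma cycles_iso_trans: "cycles_iso a b \<Longrightarrow> cycles_iso b c \<Longrightarrow> cycles_iso a c"
  unfolding cycles_iso_def using digraph_iso_trans by auto

lemma mem_cycle_digraph:
  assumes "u < length a" "v < length a"
  shows "(u, v) \<in> cycle_digraph a \<longleftrightarrow>
    (v = Suc u mod length a \<and> fst (a ! u)) \<or> (u = Suc v mod length a \<and> snd (a ! v))"
  using assms by (auto simp: cycle_digraph_def)

lemma cycles_iso_rotate1: "cycles_iso a (rotate1 a)"
proof -
  let ?m = "length a"
  let ?\<sigma> = "\<lambda>k. Suc k mod ?m"
  have "inj_on ?\<sigma> {..<?m}"
    by (auto intro: inj_onI simp: Suc_mod_eq_iff)
  then have "bij_betw ?\<sigma> {..<?m} {..<?m}"
    by (intro bij_betw_imageI endo_inj_surj) auto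
  moreover have "(u, v) \<in> cycle_digraph (rotate1 a) \<longleftrightarrow> (?\<sigma> u, ?\<sigma> v) \<in> cycle_digraph a"
    if "u < ?m" "v < ?m" for u v
    using that by (simp add: mem_cycle_digraph nth_rotate1 Suc_mod_eq_iff)
  ultimately have "digraph_iso ?m (cycle_digraph (rotate1 a)) (cycle_digraph a)"
    unfolding digraph_iso_def by blast
  then have "cycles_iso (rotate1 a) a"
    by (simp add: cycles_iso_def)
  then show ?thesis
    by (rule cycles_iso_sym)
qed

definition cycle_reverse :: "code list \<Rightarrow> code list" where
  "cycle_reverse a = map prod.swap (rev a)"

lemma length_cycle_reverse [simp]: "length (cycle_reverse a) = length a"
  by (simp add: cycle_reverse_def)

lemma nth_cycle_reverse: "k < length a \<Longrightarrow> cycle_reverse a ! k = prod.swap (a ! (length a - Suc k))"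
  by (simp add: cycle_reverse_def rev_nth)

text \<open>Reading the cycle backwards relabels vertex u as -u modulo m.\<close>

lemma cycles_iso_cycle_reverse: "cycles_iso a (cycle_reverse a)"
proof -
  let ?m = "length a"
  let ?\<tau> = "\<lambda>u. (?m - u) mod ?m"
  have \<tau>_less: "?\<tau> u < ?m" if "u < ?m" for u
    using that by (intro mod_less_divisor) auto
  have \<tau>_\<tau>: "?\<tau> (?\<tau> u) = u" if "u < ?m" for u
    using that by (cases "u = 0") auto
  have \<tau>_pred: "?m - Suc u = ?\<tau> (Suc u mod ?m)" if "u < ?m" for u
    using that by (cases "Suc u = ?m") (auto simp: mod_Suc)
  have \<tau>_Suc: "?\<tau> u = Suc (?\<tau> v) mod ?m \<longleftrightarrow> v = Suc u mod ?m" if "u < ?m" "v < ?m" for u v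
    using that by (cases "u = 0"; cases "v = 0") (auto simp: mod_Suc)
  have "bij_betw ?\<tau> {..<?m} {..<?m}"
    using \<tau>_less \<tau>_\<tau> by (intro bij_betw_byWitness[where f' = ?\<tau>]) auto
  moreover have "(u, v) \<in> cycle_digraph (cycle_reverse a) \<longleftrightarrow> (?\<tau> u, ?\<tau> v) \<in> cycle_digraph a"
    if "u < ?m" "v < ?m" for u v
  proof -
    have "(u, v) \<in> cycle_digraph (cycle_reverse a) \<longleftrightarrow>
        (v = Suc u mod ?m \<and> snd (a ! (?m - Suc u))) \<or> (u = Suc v mod ?m \<and> fst (a ! (?m - Suc v)))"
      using that by (simp add: mem_cycle_digraph nth_cycle_reverse)
    also have "\<dots> \<longleftrightarrow> (?\<tau> u = Suc (?\<tau> v) mod ?m \<and> snd (a ! ?\<tau> v)) \<or>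
        (?\<tau> v = Suc (?\<tau> u) mod ?m \<and> fst (a ! ?\<tau> u))"
      using \<tau>_Suc[OF that] \<tau>_Suc[OF that(2,1)] \<tau>_pred[OF that(1)] \<tau>_pred[OF that(2)] by metis
    also have "\<dots> \<longleftrightarrow> (?\<tau> u, ?\<tau> v) \<in> cycle_digraph a"
      using \<tau>_less[OF that(1)] \<tau>_less[OF that(2)] by (auto simp: mem_cycle_digraph)
    finally show ?thesis .
  qed
  ultimately have "digraph_iso ?m (cycle_digraph (cycle_reverse a)) (cycle_digraph a)"
    unfolding digraph_iso_def by blast
  then have "cycles_iso (cycle_reverse a) a"
    by (simp add: cycles_iso_def)
  then show ?thesis
    by (rule cycles_iso_sym)
qed

lemma double_count_rotate1: "double_count (rotate1 a) = double_count a"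
  by (cases a) (simp_all add: double_count_def)

lemma double_count_cycle_reverse: "double_count (cycle_reverse a) = double_count a"
proof -
  have "dbl \<circ> prod.swap = dbl"
    by (auto simp: dbl_def)
  then show ?thesis
    by (simp add: double_count_def cycle_reverse_def rev_map[symmetric])
qed

lemma diff_pattern_rotate1:
  assumes "diff_pattern p q a b" "even (length a)"
  shows "diff_pattern q p (rotate1 a) (rotate1 b)"
  unfolding diff_pattern_def
proof (intro conjI allI impI)
  show "length (rotate1 b) = length (rotate1 a)"
    using assms(1) by (simp add: diff_pattern_def)
  fix k assume k: "k < length (rotate1 a)"
  then have "Suc k mod length a < length a" and "even (Suc k mod length a) \<longleftrightarrow> odd k"
    using assms(2) by (auto simp: even_Suc_mod_iff)
  moreover have "fwd_diff (rotate1 a) (rotate1 b) k = fwd_diff a b (Suc k mod length a)"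
    and "bwd_diff (rotate1 a) (rotate1 b) k = bwd_diff a b (Suc k mod length a)"
    using assms(1) k by (simp_all add: diff_pattern_def fwd_diff_def bwd_diff_def nth_rotate1)
  ultimately show "fwd_diff (rotate1 a) (rotate1 b) k = (if even k then q else p)"
    and "bwd_diff (rotate1 a) (rotate1 b) k = (if even k then - p else - q)"
    using assms(1) by (auto simp: diff_pattern_def)
qed

lemma diff_pattern_cycle_reverse:
  assumes "diff_pattern p q a b" "even (length a)"
  shows "diff_pattern (- p) (- q) (cycle_reverse a) (cycle_reverse b)"
  unfolding diff_pattern_def
proof (intro conjI allI impI)
  show "length (cycle_reverse b) = length (cycle_reverse a)"
    using assms(1) by (simp add: diff_pattern_def)
  fix k assume "k < length (cycle_reverse a)"
  then have k: "k < length a" by simp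
  then have "length a - Suc k < length a" and "even (length a - Suc k) \<longleftrightarrow> odd k"
    using assms(2) by auto
  moreover have "fwd_diff (cycle_reverse a) (cycle_reverse b) k = bwd_diff a b (length a - Suc k)"
    and "bwd_diff (cycle_reverse a) (cycle_reverse b) k = fwd_diff a b (length a - Suc k)"
    using assms(1) k
    by (simp_all add: diff_pattern_def fwd_diff_def bwd_diff_def nth_cycle_reverse fwd_def bwd_def)
  ultimately show "fwd_diff (cycle_reverse a) (cycle_reverse b) k = (if even k then - p else - q)"
    and "bwd_diff (cycle_reverse a) (cycle_reverse b) k = (if even k then - (- q) else - (- p))"
    using assms(1) by (auto simp: diff_pattern_def)
qed

section \<open>Normal form of an identity (*) for even m\<close>

lemma diff_pattern_normal_form:
  assumes "diff_pattern p q a b" "even (length a)" "double_count a \<noteq> double_count b"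
  obtains a' b' where "diff_pattern 1 0 a' b'" "length a' = length a"
    "cycles_iso a a'" "cycles_iso b b'"
    "double_count a' = double_count a" "double_count b' = double_count b"
proof -
  have "length a \<noteq> 0"
    using assms(1,3) by (auto simp: diff_pattern_def double_count_def)
  then have "0 < length a" "1 < length a"
    using assms(2) by presburger+
  then have "p = fwd_diff a b 0" "q = fwd_diff a b 1"
    using assms(1) by (auto simp: diff_pattern_def)
  then have "p \<in> {-1, 0, 1}" "q \<in> {-1, 0, 1}"
    using fwd_diff_range by simp_all
  moreover have "p \<noteq> q" "q \<noteq> - p"
    using assms double_count_eq_if_diff_pattern_same double_count_eq_if_diff_pattern_opposite
    by metis+
  ultimately consider "p = 1" "q = 0" | "p = 0" "q = 1" | "p = -1" "q = 0" | "p = 0" "q = -1"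
    by auto
  then show ?thesis
  proof cases
    case 1
    then show ?thesis
      using that assms(1) cycles_iso_refl by blast
  next
    case 2
    then show ?thesis
      using that diff_pattern_rotate1[OF assms(1,2)] cycles_iso_rotate1 double_count_rotate1
      by simp
  next
    case 3
    then show ?thesis
      using that diff_pattern_cycle_reverse[OF assms(1,2)] cycles_iso_cycle_reverse
        double_count_cycle_reverse by simp
  next
    case 4
    then have "diff_pattern 1 0 (cycle_reverse (rotate1 a)) (cycle_reverse (rotate1 b))"
      using diff_pattern_cycle_reverse[OF diff_pattern_rotate1[OF assms(1,2)]] assms(2) by simp
    moreover have "cycles_iso c (cycle_reverse (rotate1 c))" for c
      using cycles_iso_trans cycles_iso_rotate1 cycles_iso_cycle_reverse by blast
    ultimately show ?thesis
      using that by (simp add: double_count_rotate1 double_count_cycle_reverse)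
  qed
qed

lemma diff_pattern_1_0_imp_types:
  assumes "diff_pattern 1 0 a b" "length a = 2 * N"
  obtains x y where "a = type_a N x y" "b = type_b N x y"
proof -
  define x where "x j = snd (a ! (2 * j))" for j
  define y where "y j = fst (a ! (2 * j + 1))" for j
  have "a ! k = type_a N x y ! k \<and> b ! k = type_b N x y ! k" if k: "k < 2 * N" for k
  proof (cases "even k")
    case True
    then have "fwd_diff a b k = 1" "bwd_diff a b k = 0" "x (k div 2) = snd (a ! k)"
      using assms k by (auto simp: diff_pattern_def x_def)
    then show ?thesis
      using k True
      by (cases "fst (a ! k)"; cases "snd (a ! k)"; cases "fst (b ! k)"; cases "snd (b ! k)")
        (simp_all add: nth_type_a nth_type_b prod_eq_iff fwd_diff_def bwd_diff_def fwd_def bwd_def)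
  next
    case False
    then have "fwd_diff a b k = 0" "bwd_diff a b k = -1" "y (k div 2) = fst (a ! k)"
      using assms k by (auto simp: diff_pattern_def y_def)
    then show ?thesis
      using k False
      by (cases "fst (a ! k)"; cases "snd (a ! k)"; cases "fst (b ! k)"; cases "snd (b ! k)")
        (simp_all add: nth_type_a nth_type_b prod_eq_iff fwd_diff_def bwd_diff_def fwd_def bwd_def)
  qed
  then have "a = type_a N x y" "b = type_b N x y"
    using assms by (auto intro: nth_equalityI simp: diff_pattern_def)
  then show ?thesis ..
qed

lemma star_ident_even_length_imp_iso_types:
  assumes "star_ident n a b c0" "length a = 2 * N" "length b = 2 * N" "2 * N \<le> n" "c0 \<noteq> 0"
  obtains x y where "c0_of N x y = c0" "cycles_iso a (type_a N x y)" "cycles_iso b (type_b N x y)"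
proof -
  have even: "even (length a)"
    using assms(2) by simp
  have counts: "double_count a = c0 + double_count b"
    using star_ident_double_count assms(1-4) by simp
  have "diff_pattern (fwd_diff a b 0) (fwd_diff a b 1) a b"
    using star_ident_even_length_diff_pattern[OF assms(1) _ _ even] assms(2-4) by simp
  moreover have "double_count a \<noteq> double_count b"
    using counts assms(5) by simp
  ultimately obtain a' b' where "diff_pattern 1 0 a' b'" "length a' = length a"
    "cycles_iso a a'" "cycles_iso b b'"
    "double_count a' = double_count a" "double_count b' = double_count b"
    using diff_pattern_normal_form even by metis
  moreover obtain x y where "a' = type_a N x y" "b' = type_b N x y"
    using diff_pattern_1_0_imp_types calculation(1,2) assms(2) by metis
  ultimately show ?thesis
    using that[of x y] counts by (simp add: c0_of_eq_double_count_diff)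
qed

theorem lemma1:
  fixes m n :: nat
  assumes m3: "m \<ge> 3" and nm: "n \<ge> m"
  shows
    "(\<forall>a b c0 \<rho> \<gamma> \<alpha> \<beta>. length a = m \<and> length b = m \<and> admissible n \<alpha> \<beta> \<and>
        star_at \<rho> \<gamma> \<alpha> \<beta> n a b c0 \<longrightarrow>
        g_nm \<rho> \<gamma> \<alpha> \<beta> n a / g_nm \<rho> \<gamma> \<alpha> \<beta> n b = exp (c0 * \<rho>))
   \<and> (odd m \<longrightarrow>
        \<not> (\<exists>a b c0. length a = m \<and> length b = m \<and> c0 > 0 \<and> star_ident n a b c0))
   \<and> (even m \<longrightarrow> (\<forall>x y. c0_of (m div 2) x y > 0 \<longrightarrow>
        star_ident n (type_a (m div 2) x y) (type_b (m div 2) x y) (c0_of (m div 2) x y) \<and>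
        (\<forall>\<rho> \<gamma> \<alpha> \<beta>. admissible n \<alpha> \<beta> \<longrightarrow>
           g_nm \<rho> \<gamma> \<alpha> \<beta> n (type_a (m div 2) x y) / g_nm \<rho> \<gamma> \<alpha> \<beta> n (type_b (m div 2) x y)
             = exp (c0_of (m div 2) x y * \<rho>))))
   \<and> (even m \<longrightarrow> (\<forall>a' b' c0. length a' = m \<and> length b' = m \<and> c0 > 0 \<and> star_ident n a' b' c0 \<longrightarrow>
        (\<exists>x y. c0_of (m div 2) x y > 0 \<and>
           cycles_iso a' (type_a (m div 2) x y) \<and> cycles_iso b' (type_b (m div 2) x y))))"
proof (intro conjI impI allI)
  show "g_nm \<rho> \<gamma> \<alpha> \<beta> n a / g_nm \<rho> \<gamma> \<alpha> \<beta> n b = exp (c0 * \<rho>)"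
    if "length a = m \<and> length b = m \<and> admissible n \<alpha> \<beta> \<and> star_at \<rho> \<gamma> \<alpha> \<beta> n a b c0"
    for a b c0 \<rho> \<gamma> \<alpha> \<beta>
    using g_nm_ratio_if_star_at that nm by simp
next
  assume "odd m"
  then show "\<not> (\<exists>a b c0. length a = m \<and> length b = m \<and> c0 > 0 \<and> star_ident n a b c0)"
    using star_ident_odd_length_imp_zero nm by fastforce
next
  fix x y
  show "star_ident n (type_a (m div 2) x y) (type_b (m div 2) x y) (c0_of (m div 2) x y)"
    by (simp add: star_ident_def star_at_type_a_type_b)
  assume "even m"
  then show "g_nm \<rho> \<gamma> \<alpha> \<beta> n (type_a (m div 2) x y) / g_nm \<rho> \<gamma> \<alpha> \<beta> n (type_b (m div 2) x y)
      = exp (c0_of (m div 2) x y * \<rho>)" for \<rho> \<gamma> \<alpha> \<beta>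
    using g_nm_ratio_if_star_at star_at_type_a_type_b nm by simp
next
  fix a' b' c0
  assume "even m" and hyps: "length a' = m \<and> length b' = m \<and> c0 > 0 \<and> star_ident n a' b' c0"
  then obtain x y where "c0_of (m div 2) x y = c0"
    "cycles_iso a' (type_a (m div 2) x y)" "cycles_iso b' (type_b (m div 2) x y)"
    using star_ident_even_length_imp_iso_types[of n a' b' c0 "m div 2"] nm by auto
  then show "\<exists>x y. c0_of (m div 2) x y > 0 \<and>
      cycles_iso a' (type_a (m div 2) x y) \<and> cycles_iso b' (type_b (m div 2) x y)"
    using hyps by auto
qed

end
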